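(* Let $0<a\le b$. For $\mathbf v_c\in[a,b]^4$ let $\mathbf p_c$ be the unique maximizer of $L_{\mathbf v_c}$ over the simplex $\Delta$, and define $$R_{\max}(c)=\max_{\mathbf v_t\in[a,b]^4}\left[1-\left(\frac{L_{\mathbf v_t}(\mathbf p_c)}{\max_{\mathbf p\in\Delta}L_{\mathbf v_t}(\mathbf p)}\right)^{1/3}\right].$$ Then, as $\mathbf v_c$ ranges over $[a,b]^4$, $R_{\max}(c)$ attains its minimum if and only if $\mathbf p_c=(1/4,1/4,1/4,1/4)$, the uniform design.
   Context: Setting: a $2^2$ experiment with binary response under a generalized linear model with main-effects linear predictor $\eta=\beta_0+\beta_1x_1+\beta_2x_2$. A design is a vector $\mathbf p=(p_1,p_2,p_3,p_4)$ in the simplex $\Delta=\{p_i\ge0,\ \sum_i p_i=1\}$. With $w_i>0$ the GLM weights at the four design points and $v_i=1/w_i$, the $D$-criterion equals $16w_1w_2w_3w_4L_{\mathbf v}(\mathbf p)$ where $$L_{\mathbf v}(\mathbf p)=v_4p_1p_2p_3+v_3p_1p_2p_4+v_2p_1p_3p_4+v_1p_2p_3p_4 .$$ For every $\mathbf v$ with positive entries, $L_{\mathbf v}$ has a unique maximizer on $\Delta$ (the locally $D$-optimal design). $\mathbf v_c$ is the assumed value, $\mathbf v_t$ the true value, and the bracketed quantity is the relative loss of efficiency of using $\mathbf p_c$ when $\mathbf v_t$ is true; $R_{\max}(c)$ is a function of $\mathbf p_c$ only. *)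

theory Defs
  imports "HOL-Analysis.Analysis"
begin

text \<open>Designs and weight-inverse vectors are vectors in real^4, components indexed 1..4.\<close>

definition simplex4 :: "(real^4) set" where
  "simplex4 = {p. (\<forall>i. 0 \<le> p$i) \<and> (\<Sum>i\<in>UNIV. p$i) = 1}"

definition Lv :: "real^4 \<Rightarrow> real^4 \<Rightarrow> real" where
  "Lv v p = v$4 * p$1 * p$2 * p$3 + v$3 * p$1 * p$2 * p$4
          + v$2 * p$1 * p$3 * p$4 + v$1 * p$2 * p$3 * p$4"

text \<open>Maximum of L_v over the simplex (it is attained, the simplex being compact).\<close>
definition Lmax :: "real^4 \<Rightarrow> real" where
  "Lmax v = (SUP p\<in>simplex4. Lv v p)"

definition opt_design :: "real^4 \<Rightarrow> real^4" where
  "opt_design v = (THE p. p \<in> simplex4 \<and> (\<forall>q\<in>simplex4. Lv v q \<le> Lv v p))"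

definition box4 :: "real \<Rightarrow> real \<Rightarrow> (real^4) set" where
  "box4 a b = {v. \<forall>i. a \<le> v$i \<and> v$i \<le> b}"

definition eff_loss :: "real^4 \<Rightarrow> real^4 \<Rightarrow> real" where
  "eff_loss pc vt = 1 - (Lv vt pc / Lmax vt) powr (1/3)"

text \<open>R_max(c): maximum over v_t in [a,b]^4 (attained by compactness/continuity).\<close>
definition Rmax :: "real \<Rightarrow> real \<Rightarrow> real^4 \<Rightarrow> real" where
  "Rmax a b vc = (SUP vt\<in>box4 a b. eff_loss (opt_design vc) vt)"

definition uniform_design :: "real^4" where
  "uniform_design = (\<chi> i. 1/4)"

end

theory Submission
  imports Defs "HOL-Combinatorics.Transposition"
begin

text \<open>
  Write \<open>e\<^sub>3(p)\<close> for the third elementary symmetric polynomial of the design \<open>p\<close>.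
  Summing \<open>L\<^sub>w(p)\<close> over the four cyclic rotations of a true vector \<open>w\<close> gives
  \<open>(\<Sum>w\<^sub>i) e\<^sub>3(p) = 16 e\<^sub>3(p) L\<^sub>w(u)\<close>, where \<open>u\<close> is the uniform design, while rotating \<open>w\<close>
  does not change \<open>max L\<^sub>w\<close>. So against some rotation of \<open>w\<close> the design \<open>p\<close> has efficiency at
  most \<open>16 e\<^sub>3(p)\<close> times that of \<open>u\<close> against \<open>w\<close>; since the efficiency of \<open>u\<close> is at least
  \<open>a/b\<close>, the worst-case loss of \<open>p\<close> exceeds that of \<open>u\<close> by at least
  \<open>(1 - (16 e\<^sub>3(p))\<^bsup>1/3\<^esup>) (a/b)\<^bsup>1/3\<^esup>\<close>, which by Maclaurin's inequality is positive unless
  \<open>p = u\<close>. As \<open>u\<close> is optimal for the constant vector \<open>(a,a,a,a)\<close>, the claim follows.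

  The optimal design is unique, which is what makes \<open>R\<^sub>m\<^sub>a\<^sub>x\<close> well defined: an optimal
  design with a zero coordinate forces \<open>v\<^sub>4 \<ge> v\<^sub>1 + v\<^sub>2 + v\<^sub>3\<close> (up to
  symmetry) and then AM-GM pins every optimum to the face centroid; two distinct interior optima
  would make the cubic \<open>t \<mapsto> L\<^sub>v(p + t(q - p))\<close> have local maxima at \<open>0\<close> and \<open>1\<close>, hence be
  constant, so the line would meet the boundary in a third optimum.
\<close>

lemma amgm3_defect:
  fixes x y z :: real
  assumes "0 \<le> x" "0 \<le> y" "0 \<le> z"
  shows "27*x*y*z + (x+y+z) * ((x-y)^2 + (y-z)^2 + (z-x)^2) / 2 \<le> (x+y+z)^3"
proof -
  have "(x+y+z)^3 - (27*x*y*z + (x+y+z) * ((x-y)^2 + (y-z)^2 + (z-x)^2) / 2)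
      = 3 * (x*(y-z)^2 + y*(x-z)^2 + z*(x-y)^2)"
    by (simp add: field_simps power2_eq_square power3_eq_cube)
  moreover have "0 \<le> 3 * (x*(y-z)^2 + y*(x-z)^2 + z*(x-y)^2)"
    using assms by simp
  ultimately show ?thesis by simp
qed

lemma amgm3_le_one:
  fixes x y z :: real
  assumes "0 \<le> x" "0 \<le> y" "0 \<le> z" "x + y + z \<le> 1"
  shows "27*x*y*z \<le> 1"
proof -
  have "0 \<le> (x+y+z) * ((x-y)^2 + (y-z)^2 + (z-x)^2) / 2"
    using assms by simp
  moreover have "(x+y+z)^3 \<le> 1"
    using assms by (simp add: power_le_one)
  ultimately show ?thesis
    using amgm3_defect[OF assms(1-3)] by linarith
qed

lemma amgm3_eq_one_imp:
  fixes x y z :: real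
  assumes "0 \<le> x" "0 \<le> y" "0 \<le> z" "x + y + z = 1" "27*x*y*z = 1"
  shows "x = 1/3 \<and> y = 1/3 \<and> z = 1/3"
proof -
  have "(x-y)^2 + (y-z)^2 + (z-x)^2 \<le> 0"
    using amgm3_defect[OF assms(1-3)] assms(4,5) by simp
  then have "(x-y)^2 = 0" "(y-z)^2 = 0"
    by (smt (verit) zero_le_power2)+
  then show ?thesis
    using assms(4) by simp
qed

lemma maclaurin4_defect:
  fixes a b c d :: real
  assumes "0 \<le> a" "0 \<le> b" "0 \<le> c" "0 \<le> d"
  shows "(a+b+c+d) * ((a-b)^2 + (a-c)^2 + (a-d)^2 + (b-c)^2 + (b-d)^2 + (c-d)^2)
     \<le> 6 * ((a+b+c+d)^3 - 16 * (a*b*c + a*b*d + a*c*d + b*c*d))"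
proof -
  have "6 * ((a+b+c+d)^3 - 16 * (a*b*c + a*b*d + a*c*d + b*c*d))
       - (a+b+c+d) * ((a-b)^2 + (a-c)^2 + (a-d)^2 + (b-c)^2 + (b-d)^2 + (c-d)^2)
     = (a+b)*(a-b)^2 + (a+c)*(a-c)^2 + (a+d)*(a-d)^2
        + (b+c)*(b-c)^2 + (b+d)*(b-d)^2 + (c+d)*(c-d)^2
       + 9 * ((a*(b-c)^2 + b*(a-c)^2 + c*(a-b)^2) + (a*(b-d)^2 + b*(a-d)^2 + d*(a-b)^2)
              + (a*(c-d)^2 + c*(a-d)^2 + d*(a-c)^2) + (b*(c-d)^2 + c*(b-d)^2 + d*(b-c)^2))"
    by (simp add: field_simps power2_eq_square power3_eq_cube)
  moreover have "0 \<le> (a+b)*(a-b)^2 + (a+c)*(a-c)^2 + (a+d)*(a-d)^2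
        + (b+c)*(b-c)^2 + (b+d)*(b-d)^2 + (c+d)*(c-d)^2
       + 9 * ((a*(b-c)^2 + b*(a-c)^2 + c*(a-b)^2) + (a*(b-d)^2 + b*(a-d)^2 + d*(a-b)^2)
              + (a*(c-d)^2 + c*(a-d)^2 + d*(a-c)^2) + (b*(c-d)^2 + c*(b-d)^2 + d*(b-c)^2))"
    using assms by simp
  ultimately show ?thesis by simp
qed

lemma simplex4_iff:
  "p \<in> simplex4 \<longleftrightarrow> 0 \<le> p$1 \<and> 0 \<le> p$2 \<and> 0 \<le> p$3 \<and> 0 \<le> p$4 \<and> p$1 + p$2 + p$3 + p$4 = 1"
  by (simp add: simplex4_def forall_4 sum_4)

lemma uniform_design_simplex4: "uniform_design \<in> simplex4"
  by (simp add: simplex4_iff uniform_design_def)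

lemma compact_simplex4: "compact simplex4"
proof -
  have eq: "simplex4 = {p::real^4. 0 \<le> p$1 \<and> 0 \<le> p$2 \<and> 0 \<le> p$3 \<and> 0 \<le> p$4 \<and> p$1 + p$2 + p$3 + p$4 = 1}"
    by (auto simp: simplex4_iff)
  have "closed simplex4"
    unfolding eq by (intro closed_Collect_conj closed_Collect_le closed_Collect_eq continuous_intros)
  moreover have "norm p \<le> 1" if "p \<in> simplex4" for p :: "real^4"
  proof -
    have "norm p \<le> (\<Sum>i\<in>UNIV. \<bar>p$i\<bar>)" by (rule norm_le_l1_cart)
    also have "\<dots> = 1" using that by (simp add: simplex4_def)
    finally show ?thesis .
  qed
  then have "bounded simplex4" by (auto simp: bounded_iff)
  ultimately show ?thesis by (simp add: compact_eq_bounded_closed)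
qed

lemma Lv_nonneg: "p \<in> simplex4 \<Longrightarrow> \<forall>i. 0 \<le> v$i \<Longrightarrow> 0 \<le> Lv v p"
  by (simp add: Lv_def simplex4_iff)

lemma Lv_uniform_design: "Lv v uniform_design = (v$1 + v$2 + v$3 + v$4) / 64"
  by (simp add: Lv_def uniform_design_def field_simps)

lemma bdd_above_Lv: "bdd_above (Lv v ` simplex4)"
proof -
  have "continuous_on simplex4 (Lv v)"
    unfolding Lv_def by (intro continuous_intros)
  then show ?thesis
    using compact_simplex4 by (intro bounded_imp_bdd_above compact_imp_bounded compact_continuous_image)
qed

lemma Lv_le_Lmax: "q \<in> simplex4 \<Longrightarrow> Lv v q \<le> Lmax v"
  unfolding Lmax_def by (rule cSUP_upper[OF _ bdd_above_Lv])

definition esym3 :: "real^4 \<Rightarrow> real" where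
  "esym3 p = p$1*p$2*p$3 + p$1*p$2*p$4 + p$1*p$3*p$4 + p$2*p$3*p$4"

lemma esym3_defect:
  assumes "p \<in> simplex4"
  shows "(p$1-p$2)^2 + (p$1-p$3)^2 + (p$1-p$4)^2 + (p$2-p$3)^2 + (p$2-p$4)^2 + (p$3-p$4)^2
      \<le> 6 * (1 - 16 * esym3 p)"
  using maclaurin4_defect[of "p$1" "p$2" "p$3" "p$4"] assms
  by (simp add: simplex4_iff esym3_def)

lemma esym3_le:
  assumes "p \<in> simplex4"
  shows "16 * esym3 p \<le> 1"
proof -
  define S where "S = (p$1-p$2)^2 + (p$1-p$3)^2 + (p$1-p$4)^2 + (p$2-p$3)^2 + (p$2-p$4)^2 + (p$3-p$4)^2"
  have "0 \<le> S" by (simp add: S_def)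
  with esym3_defect[OF assms, folded S_def] show ?thesis by (simp add: algebra_simps)
qed

lemma esym3_less:
  assumes "p \<in> simplex4" "p \<noteq> uniform_design"
  shows "16 * esym3 p < 1"
proof (rule ccontr)
  assume "\<not> 16 * esym3 p < 1"
  then have "6 * (1 - 16 * esym3 p) \<le> 0" by simp
  with esym3_defect[OF assms(1)]
  have "(p$1-p$2)^2 + (p$1-p$3)^2 + (p$1-p$4)^2 + (p$2-p$3)^2 + (p$2-p$4)^2 + (p$3-p$4)^2 \<le> 0"
    by (rule order_trans)
  then have "(p$1-p$2)^2 = 0" "(p$1-p$3)^2 = 0" "(p$1-p$4)^2 = 0"
    by (smt (verit) zero_le_power2)+
  then have "p = uniform_design"
    using assms(1) by (simp add: simplex4_iff vec_eq_iff forall_4 uniform_design_def)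
  with assms(2) show False ..
qed

lemma Lv_le_mult_esym3:
  assumes "v \<in> box4 a b" "p \<in> simplex4"
  shows "Lv v p \<le> b * esym3 p"
proof -
  have v: "v$1 \<le> b" "v$2 \<le> b" "v$3 \<le> b" "v$4 \<le> b"
    using assms(1) by (auto simp: box4_def)
  have p: "0 \<le> p$1" "0 \<le> p$2" "0 \<le> p$3" "0 \<le> p$4"
    using assms(2) by (auto simp: simplex4_iff)
  have "v$4*(p$1*p$2*p$3) + v$3*(p$1*p$2*p$4) + v$2*(p$1*p$3*p$4) + v$1*(p$2*p$3*p$4)
      \<le> b*(p$1*p$2*p$3) + b*(p$1*p$2*p$4) + b*(p$1*p$3*p$4) + b*(p$2*p$3*p$4)"
    using v p by (intro add_mono mult_right_mono) auto
  then show ?thesis by (simp add: Lv_def esym3_def algebra_simps)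
qed

lemma Lmax_le:
  assumes "v \<in> box4 a b" "0 \<le> b"
  shows "Lmax v \<le> b / 16"
  unfolding Lmax_def
proof (rule cSUP_least)
  show "simplex4 \<noteq> {}" using uniform_design_simplex4 by blast
  fix p assume p: "p \<in> simplex4"
  have "Lv v p \<le> b * esym3 p" using Lv_le_mult_esym3[OF assms(1) p] .
  also have "\<dots> \<le> b * (1/16)" using esym3_le[OF p] assms(2) by (intro mult_left_mono) auto
  finally show "Lv v p \<le> b / 16" by simp
qed

definition is_opt_design :: "real^4 \<Rightarrow> real^4 \<Rightarrow> bool" where
  "is_opt_design v p \<longleftrightarrow> p \<in> simplex4 \<and> (\<forall>q\<in>simplex4. Lv v q \<le> Lv v p)"

section \<open>Permuting the coordinates\<close>

definition permute_vec :: "('n \<Rightarrow> 'n) \<Rightarrow> 'a^'n \<Rightarrow> 'a^'n" where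
  "permute_vec \<sigma> x = (\<chi> i. x $ \<sigma> i)"

lemma permute_vec_nth [simp]: "permute_vec \<sigma> x $ i = x $ \<sigma> i"
  by (simp add: permute_vec_def)

lemma permute_vec_permute_vec [simp]: "permute_vec \<sigma> (permute_vec \<tau> x) = permute_vec (\<tau> \<circ> \<sigma>) x"
  by (simp add: vec_eq_iff)

lemma permute_vec_id [simp]: "permute_vec id x = x"
  by (simp add: vec_eq_iff)

lemma permute_vec_simplex4:
  assumes "bij \<sigma>" "p \<in> simplex4"
  shows "permute_vec \<sigma> p \<in> simplex4"
  using assms(2) sum.reindex_bij_betw[OF assms(1), of "\<lambda>i. p$i"] by (simp add: simplex4_def)

lemma permute_vec_image_simplex4:
  assumes "bij \<sigma>"
  shows "permute_vec \<sigma> ` simplex4 = simplex4"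
proof
  show "permute_vec \<sigma> ` simplex4 \<subseteq> simplex4"
    using permute_vec_simplex4[OF assms] by blast
  show "simplex4 \<subseteq> permute_vec \<sigma> ` simplex4"
  proof
    fix q assume "q \<in> simplex4"
    then have "permute_vec (inv \<sigma>) q \<in> simplex4"
      using assms by (intro permute_vec_simplex4 bij_imp_bij_inv)
    moreover have "q = permute_vec \<sigma> (permute_vec (inv \<sigma>) q)"
      using assms by (simp add: bij_is_inj)
    ultimately show "q \<in> permute_vec \<sigma> ` simplex4" by blast
  qed
qed

lemma Lv_eq_sum_prod: "Lv v p = (\<Sum>j\<in>UNIV. v$j * (\<Prod>i\<in>-{j}. p$i))"
proof -
  have "-{1::4} = {2,3,4}" "-{2::4} = {1,3,4}" "-{3::4} = {1,2,4}" "-{4::4} = {1,2,3}"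
    using exhaust_4 by auto
  then show ?thesis by (simp add: Lv_def sum_4 algebra_simps)
qed

lemma Lv_permute_vec:
  assumes "bij \<sigma>"
  shows "Lv (permute_vec \<sigma> v) (permute_vec \<sigma> p) = Lv v p"
proof -
  have "(\<Prod>i\<in>-{j}. p $ \<sigma> i) = (\<Prod>i\<in>-{\<sigma> j}. p$i)" for j
  proof -
    have "inj_on \<sigma> (-{j})" using assms by (auto simp: bij_def inj_on_def)
    then show ?thesis
      using prod.reindex[of \<sigma> "-{j}" "\<lambda>i. p$i"] assms by (simp add: bij_image_Compl_eq)
  qed
  then have "Lv (permute_vec \<sigma> v) (permute_vec \<sigma> p) = (\<Sum>j\<in>UNIV. v $ \<sigma> j * (\<Prod>i\<in>-{\<sigma> j}. p$i))"
    by (simp add: Lv_eq_sum_prod)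
  also have "\<dots> = Lv v p"
    using sum.reindex[of \<sigma> UNIV "\<lambda>j. v$j * (\<Prod>i\<in>-{j}. p$i)"] assms
    by (simp add: Lv_eq_sum_prod bij_is_inj bij_is_surj)
  finally show ?thesis .
qed

lemma Lmax_permute_vec:
  assumes "bij \<sigma>"
  shows "Lmax (permute_vec \<sigma> v) = Lmax v"
proof -
  have "Lmax (permute_vec \<sigma> v) = (SUP q\<in>permute_vec \<sigma> ` simplex4. Lv (permute_vec \<sigma> v) q)"
    by (simp add: Lmax_def permute_vec_image_simplex4[OF assms])
  also have "\<dots> = Lmax v"
    by (simp add: Lmax_def image_image Lv_permute_vec[OF assms])
  finally show ?thesis .
qed

lemma is_opt_design_permute_vec:
  assumes "bij \<sigma>" "is_opt_design v p"
  shows "is_opt_design (permute_vec \<sigma> v) (permute_vec \<sigma> p)"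
  unfolding is_opt_design_def
proof
  show "permute_vec \<sigma> p \<in> simplex4"
    using assms by (simp add: is_opt_design_def permute_vec_simplex4)
  show "\<forall>q\<in>simplex4. Lv (permute_vec \<sigma> v) q \<le> Lv (permute_vec \<sigma> v) (permute_vec \<sigma> p)"
  proof
    fix q assume "q \<in> simplex4"
    then obtain q' where "q' \<in> simplex4" "q = permute_vec \<sigma> q'"
      using permute_vec_image_simplex4[OF assms(1)] by blast
    then show "Lv (permute_vec \<sigma> v) q \<le> Lv (permute_vec \<sigma> v) (permute_vec \<sigma> p)"
      using assms(2) by (simp add: is_opt_design_def Lv_permute_vec[OF assms(1)])
  qed
qed

section \<open>Optimal designs on the boundary\<close>

definition face_centroid :: "4 \<Rightarrow> real^4" where
  "face_centroid k = (\<chi> i. if i = k then 0 else 1/3)"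

lemma face_centroid_simplex4: "face_centroid k \<in> simplex4"
  using exhaust_4[of k] by (auto simp: simplex4_iff face_centroid_def)

lemma permute_vec_transpose_face_centroid:
  "permute_vec (Transposition.transpose k 4) (face_centroid 4) = face_centroid k"
  by (auto simp: vec_eq_iff face_centroid_def Transposition.transpose_def)

lemma Lv_face_centroid4: "Lv v (face_centroid 4) = v$4 / 27"
  by (simp add: Lv_def face_centroid_def)

lemma Lv_le_if_nth4_eq_0:
  assumes "p \<in> simplex4" "p$4 = 0" "0 \<le> v$4"
  shows "Lv v p \<le> v$4 / 27"
proof -
  have "27 * p$1 * p$2 * p$3 \<le> 1"
    using assms(1,2) by (intro amgm3_le_one) (auto simp: simplex4_iff)
  then have "v$4 * (27 * p$1 * p$2 * p$3) \<le> v$4"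
    using assms(3) by (simp add: mult_left_le)
  then show ?thesis
    using assms(2) by (simp add: Lv_def)
qed

lemma exists_Lv_gt_face_value:
  assumes "v$4 < v$1 + v$2 + v$3"
  shows "\<exists>z\<in>simplex4. v$4 / 27 < Lv v z"
proof -
  define S where "S = v$1 + v$2 + v$3"
  define z :: "real \<Rightarrow> real^4" where "z \<epsilon> = (\<chi> i. if i = 4 then \<epsilon> else (1 - \<epsilon>) / 3)" for \<epsilon>
  define f where "f \<epsilon> = v$4 * ((1 - \<epsilon>) / 3)^3 + S * ((1 - \<epsilon>) / 3)^2 * \<epsilon>" for \<epsilon>
  have Lv_z: "Lv v (z \<epsilon>) = f \<epsilon>" for \<epsilon>
  proof -
    have "Lv v (\<chi> i. if i = 4 then \<epsilon> else c) = v$4 * c^3 + S * c^2 * \<epsilon>" for c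
      by (simp add: Lv_def S_def power2_eq_square power3_eq_cube algebra_simps)
    then show ?thesis by (simp add: z_def f_def)
  qed
  have "(f has_real_derivative (S - v$4) / 9) (at 0)"
    unfolding f_def by (auto intro!: derivative_eq_intros simp: power2_eq_square power3_eq_cube)
  moreover have "0 < (S - v$4) / 9"
    using assms by (simp add: S_def)
  ultimately obtain d where "0 < d" and inc: "\<forall>h>0. h < d \<longrightarrow> f 0 < f (0 + h)"
    by (metis DERIV_pos_inc_right)
  define h where "h = min (d/2) 1"
  have h: "0 < h" "h < d" "h \<le> 1"
    using \<open>0 < d\<close> by (auto simp: h_def)
  then have "z h \<in> simplex4"
    by (simp add: simplex4_iff z_def field_simps)
  moreover have "v$4 / 27 < Lv v (z h)"
  proof -
    have "v$4 / 27 = f 0" by (simp add: f_def power3_eq_cube)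
    also have "\<dots> < f h" using inc h by simp
    finally show ?thesis by (simp add: Lv_z)
  qed
  ultimately show ?thesis by blast
qed

lemma face_centroid4_unique:
  assumes pos: "\<forall>i. 0 < v$i" and heavy: "v$1 + v$2 + v$3 \<le> v$4"
    and r: "r \<in> simplex4" and ge: "v$4 / 27 \<le> Lv v r"
  shows "r = face_centroid 4"
proof -
  have r_nonneg: "0 \<le> r$1" "0 \<le> r$2" "0 \<le> r$3" "0 \<le> r$4" and r_sum: "r$1 + r$2 + r$3 + r$4 = 1"
    using r by (auto simp: simplex4_iff)
  \<comment> \<open>each bracket is nonnegative by AM-GM, so \<open>ge\<close> forces the \<open>v$1\<close>- and \<open>v$2\<close>-terms to vanish\<close>
  have decomp: "v$4 / 27 - Lv v r = (v$4 - v$1 - v$2 - v$3) * (1/27 - r$1*r$2*r$3)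
      + v$1 * (1/27 - r$2*r$3*(r$1 + r$4)) + v$2 * (1/27 - r$1*r$3*(r$2 + r$4))
      + v$3 * (1/27 - r$1*r$2*(r$3 + r$4))"
    by (simp add: Lv_def algebra_simps)
  have "27 * r$1 * r$2 * r$3 \<le> 1" "27 * r$2 * r$3 * (r$1 + r$4) \<le> 1"
       "27 * r$1 * r$3 * (r$2 + r$4) \<le> 1" "27 * r$1 * r$2 * (r$3 + r$4) \<le> 1"
    using r_nonneg r_sum by (intro amgm3_le_one; simp)+
  then have "0 \<le> (v$4 - v$1 - v$2 - v$3) * (1/27 - r$1*r$2*r$3)"
      and "0 \<le> v$1 * (1/27 - r$2*r$3*(r$1 + r$4))" and "0 \<le> v$2 * (1/27 - r$1*r$3*(r$2 + r$4))"
      and "0 \<le> v$3 * (1/27 - r$1*r$2*(r$3 + r$4))"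
    using pos heavy by (intro mult_nonneg_nonneg; simp add: less_imp_le)+
  then have "v$1 * (1/27 - r$2*r$3*(r$1 + r$4)) = 0" and "v$2 * (1/27 - r$1*r$3*(r$2 + r$4)) = 0"
    using decomp ge by linarith+
  moreover have "v$1 \<noteq> 0" "v$2 \<noteq> 0"
    using pos by (metis less_irrefl)+
  ultimately have "27 * r$2 * r$3 * (r$1 + r$4) = 1" and "27 * r$1 * r$3 * (r$2 + r$4) = 1"
    by simp_all
  then have "r$2 = 1/3 \<and> r$3 = 1/3 \<and> r$1 + r$4 = 1/3" and "r$1 = 1/3"
    using amgm3_eq_one_imp[of "r$2" "r$3" "r$1 + r$4"] amgm3_eq_one_imp[of "r$1" "r$3" "r$2 + r$4"]
      r_nonneg r_sum by (simp_all add: algebra_simps)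
  then show ?thesis
    by (simp add: vec_eq_iff forall_4 face_centroid_def)
qed

lemma is_opt_design_eq_face_centroid4:
  assumes pos: "\<forall>i. 0 < v$i" and opt_p: "is_opt_design v p" and "p$4 = 0"
    and opt_r: "is_opt_design v r"
  shows "r = face_centroid 4"
proof -
  have "v$1 + v$2 + v$3 \<le> v$4"
  proof (rule ccontr)
    assume "\<not> ?thesis"
    then obtain z where "z \<in> simplex4" "v$4 / 27 < Lv v z"
      using exists_Lv_gt_face_value by force
    moreover have "Lv v p \<le> v$4 / 27"
      using opt_p \<open>p$4 = 0\<close> pos by (intro Lv_le_if_nth4_eq_0) (auto simp: is_opt_design_def less_imp_le)
    ultimately show False
      using opt_p by (force simp: is_opt_design_def)
  qed
  moreover have "Lv v (face_centroid 4) \<le> Lv v r"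
    using opt_r face_centroid_simplex4 by (simp add: is_opt_design_def)
  ultimately show ?thesis
    using opt_r pos by (intro face_centroid4_unique) (auto simp: is_opt_design_def Lv_face_centroid4)
qed

lemma is_opt_design_eq_face_centroid:
  assumes pos: "\<forall>i. 0 < v$i" and opt_p: "is_opt_design v p" and "p$k = 0"
    and opt_r: "is_opt_design v r"
  shows "r = face_centroid k"
proof -
  define \<sigma> where "\<sigma> = Transposition.transpose k 4"
  have \<sigma>: "bij \<sigma>" "\<sigma> \<circ> \<sigma> = id"
    by (simp_all add: \<sigma>_def)
  have "permute_vec \<sigma> r = face_centroid 4"
  proof (rule is_opt_design_eq_face_centroid4)
    show "\<forall>i. 0 < permute_vec \<sigma> v $ i" using pos by simp
    show "is_opt_design (permute_vec \<sigma> v) (permute_vec \<sigma> p)"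
      using \<sigma>(1) opt_p by (rule is_opt_design_permute_vec)
    show "permute_vec \<sigma> p $ 4 = 0" using \<open>p$k = 0\<close> by (simp add: \<sigma>_def)
    show "is_opt_design (permute_vec \<sigma> v) (permute_vec \<sigma> r)"
      using \<sigma>(1) opt_r by (rule is_opt_design_permute_vec)
  qed
  then have "permute_vec \<sigma> (permute_vec \<sigma> r) = permute_vec \<sigma> (face_centroid 4)"
    by simp
  then show ?thesis
    using \<sigma>(2) by (simp add: \<sigma>_def permute_vec_transpose_face_centroid)
qed

section \<open>Uniqueness of the optimal design\<close>

lemma cubic_two_local_maxima:
  fixes c1 c2 c3 e :: real
  assumes "0 < e"
    and max0: "\<forall>t. \<bar>t\<bar> < e \<longrightarrow> c1*t + c2*t^2 + c3*t^3 \<le> 0"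
    and max1: "\<forall>t. \<bar>t - 1\<bar> < e \<longrightarrow> c1*t + c2*t^2 + c3*t^3 \<le> 0"
    and "c1 + c2 + c3 = 0"
  shows "c1 = 0 \<and> c2 = 0 \<and> c3 = 0"
proof -
  define f where "f t = c1*t + c2*t^2 + c3*t^3" for t
  have deriv: "(f has_real_derivative c1 + 2*c2*t + 3*c3*t^2) (at t)" for t
    unfolding f_def by (auto intro!: derivative_eq_intros simp: power2_eq_square)
  have "\<forall>y. \<bar>0 - y\<bar> < e \<longrightarrow> f y \<le> f 0"
    using max0 by (simp add: f_def)
  then have "c1 + 2*c2*0 + 3*c3*0^2 = 0"
    by (rule DERIV_local_max[OF deriv \<open>0 < e\<close>])
  moreover have "\<forall>y. \<bar>1 - y\<bar> < e \<longrightarrow> f y \<le> f 1"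
    using max1 assms(4) by (simp add: f_def abs_minus_commute)
  then have "c1 + 2*c2*1 + 3*c3*1^2 = 0"
    by (rule DERIV_local_max[OF deriv \<open>0 < e\<close>])
  ultimately show ?thesis
    using assms(4) by simp
qed

lemma Lv_along_line:
  "\<exists>c1 c2 c3. \<forall>t. Lv v (p + t *\<^sub>R d) = Lv v p + c1*t + c2*t^2 + c3*t^3"
proof -
  define C where "C x y =
      v$4 * (y$1*x$2*x$3 + x$1*y$2*x$3 + x$1*x$2*y$3) + v$3 * (y$1*x$2*x$4 + x$1*y$2*x$4 + x$1*x$2*y$4)
    + v$2 * (y$1*x$3*x$4 + x$1*y$3*x$4 + x$1*x$3*y$4) + v$1 * (y$2*x$3*x$4 + x$2*y$3*x$4 + x$2*x$3*y$4)"
    for x y :: "real^4"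
  have "Lv v (p + t *\<^sub>R d) = Lv v p + C p d * t + C d p * t^2 + Lv v d * t^3" for t
    by (simp add: Lv_def C_def power2_eq_square power3_eq_cube algebra_simps)
  then show ?thesis by blast
qed

lemma exists_pos_along_line:
  fixes x d :: "real^'n"
  assumes "\<forall>i. 0 < x$i"
  shows "\<exists>e>0. \<forall>t. \<bar>t\<bar> < e \<longrightarrow> (\<forall>i. 0 < x$i + t * d$i)"
proof -
  have "\<forall>\<^sub>F t in nhds 0. 0 < x$i + t * d$i" for i
  proof -
    have "((\<lambda>t. x$i + t * d$i) \<longlongrightarrow> x$i + 0 * d$i) (nhds 0)"
      by (intro tendsto_intros filterlim_ident)
    then show ?thesis
      using assms by (intro order_tendstoD(1)) auto
  qed
  then have "\<forall>\<^sub>F t in nhds 0. \<forall>i. 0 < x$i + t * d$i"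
    by (rule eventually_all_finite)
  then show ?thesis
    by (simp add: eventually_nhds_metric dist_real_def)
qed

lemma line_in_simplex4:
  assumes "p \<in> simplex4" "q \<in> simplex4" "\<forall>i. 0 \<le> p$i + t * (q$i - p$i)"
  shows "p + t *\<^sub>R (q - p) \<in> simplex4"
proof -
  have "(p$1 + p$2 + p$3 + p$4) + t * ((q$1 + q$2 + q$3 + q$4) - (p$1 + p$2 + p$3 + p$4)) = 1"
    using assms(1,2) by (simp add: simplex4_iff)
  then show ?thesis
    using assms(3) by (simp add: simplex4_iff forall_4 algebra_simps)
qed

lemma exists_zero_nth_on_line:
  assumes "p \<in> simplex4" "q \<in> simplex4" "p \<noteq> q"
  shows "\<exists>t k. p + t *\<^sub>R (q - p) \<in> simplex4 \<and> (p + t *\<^sub>R (q - p))$k = 0"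
proof -
  define d where "d = q - p"
  define J where "J = {i. d$i < 0}"
  define ratio where "ratio i = p$i / (- d$i)" for i
  have "J \<noteq> {}"
  proof
    assume "J = {}"
    then have "\<forall>i. 0 \<le> d$i" by (auto simp: J_def not_less)
    moreover have "d$1 + d$2 + d$3 + d$4 = 0"
      using assms(1,2) by (simp add: simplex4_iff d_def)
    ultimately have "d = 0"
      by (simp add: vec_eq_iff forall_4)
    with assms(3) show False by (simp add: d_def)
  qed
  then have "Min (ratio ` J) \<in> ratio ` J"
    by (intro Min_in) auto
  then obtain k where "k \<in> J" and k_min: "ratio k = Min (ratio ` J)"
    by (metis imageE)
  define t where "t = ratio k"
  have "d$k < 0" using \<open>k \<in> J\<close> by (simp add: J_def)
  have "0 \<le> t"
    using assms(1) \<open>d$k < 0\<close> by (simp add: t_def ratio_def simplex4_def divide_nonneg_neg)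
  have "0 \<le> p$i + t * d$i" for i
  proof (cases "d$i < 0")
    case True
    then have "t \<le> p$i / (- d$i)"
      using k_min by (simp add: t_def ratio_def J_def)
    moreover have "0 < - d$i" using True by simp
    ultimately have "t * (- d$i) \<le> p$i" by (metis pos_le_divide_eq)
    then show ?thesis by simp
  next
    case False
    then show ?thesis
      using assms(1) \<open>0 \<le> t\<close> by (simp add: simplex4_def)
  qed
  then have "p + t *\<^sub>R (q - p) \<in> simplex4"
    using assms(1,2) by (intro line_in_simplex4) (auto simp: d_def)
  moreover have "(p + t *\<^sub>R (q - p))$k = 0"
    using \<open>d$k < 0\<close> by (simp add: t_def ratio_def d_def field_simps)
  ultimately show ?thesis by blast
qed

lemma Lv_const_on_line_of_interior_optima:
  assumes opt_p: "is_opt_design v p" and opt_q: "is_opt_design v q"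
    and p_pos: "\<forall>i. 0 < p$i" and q_pos: "\<forall>i. 0 < q$i"
  shows "Lv v (p + t *\<^sub>R (q - p)) = Lv v p"
proof -
  define d where "d = q - p"
  have p: "p \<in> simplex4" and q: "q \<in> simplex4"
    using opt_p opt_q by (auto simp: is_opt_design_def)
  obtain c1 c2 c3 where cubic: "\<And>t. Lv v (p + t *\<^sub>R d) = Lv v p + c1*t + c2*t^2 + c3*t^3"
    using Lv_along_line by blast
  have le: "c1*t + c2*t^2 + c3*t^3 \<le> 0" if "\<forall>i. 0 < p$i + t * d$i" for t
  proof -
    have "p + t *\<^sub>R d \<in> simplex4"
      using that p q unfolding d_def by (intro line_in_simplex4) (auto simp: less_imp_le)
    then show ?thesis
      using opt_p cubic[of t] by (auto simp: is_opt_design_def)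
  qed
  obtain e0 where "0 < e0" and e0: "\<forall>t. \<bar>t\<bar> < e0 \<longrightarrow> (\<forall>i. 0 < p$i + t * d$i)"
    using exists_pos_along_line[OF p_pos] by blast
  obtain e1 where "0 < e1" and e1: "\<forall>t. \<bar>t\<bar> < e1 \<longrightarrow> (\<forall>i. 0 < q$i + t * d$i)"
    using exists_pos_along_line[OF q_pos] by blast
  have "Lv v q = Lv v p"
    using opt_p opt_q p q by (auto simp: is_opt_design_def intro: order_antisym)
  then have "c1 + c2 + c3 = 0"
    using cubic[of 1] by (simp add: d_def)
  moreover have "\<forall>t. \<bar>t\<bar> < min e0 e1 \<longrightarrow> c1*t + c2*t^2 + c3*t^3 \<le> 0"
    using e0 le by simp
  moreover have "\<forall>t. \<bar>t - 1\<bar> < min e0 e1 \<longrightarrow> c1*t + c2*t^2 + c3*t^3 \<le> 0"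
  proof (intro allI impI le)
    fix t i assume "\<bar>t - 1\<bar> < min e0 e1"
    then have "0 < q$i + (t - 1) * d$i" using e1 by simp
    then show "0 < p$i + t * d$i" by (simp add: d_def algebra_simps)
  qed
  ultimately have "c1 = 0 \<and> c2 = 0 \<and> c3 = 0"
    using \<open>0 < e0\<close> \<open>0 < e1\<close> by (intro cubic_two_local_maxima[of "min e0 e1"]) auto
  then show ?thesis
    using cubic by (simp add: d_def)
qed

lemma is_opt_design_interior_unique:
  assumes pos: "\<forall>i. 0 < v$i" and opt_p: "is_opt_design v p" and opt_q: "is_opt_design v q"
    and p_pos: "\<forall>i. 0 < p$i" and q_pos: "\<forall>i. 0 < q$i"
  shows "p = q"
proof (rule ccontr)
  assume "p \<noteq> q"
  moreover have "p \<in> simplex4" "q \<in> simplex4"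
    using opt_p opt_q by (auto simp: is_opt_design_def)
  ultimately obtain t k where z: "p + t *\<^sub>R (q - p) \<in> simplex4" and "(p + t *\<^sub>R (q - p))$k = 0"
    using exists_zero_nth_on_line by blast
  have "is_opt_design v (p + t *\<^sub>R (q - p))"
    using z opt_p Lv_const_on_line_of_interior_optima[OF assms(2-5)] by (simp add: is_opt_design_def)
  then have "p = face_centroid k"
    using is_opt_design_eq_face_centroid[OF pos _ \<open>(p + t *\<^sub>R (q - p))$k = 0\<close> opt_p] by blast
  then have "p$k = 0"
    by (simp add: face_centroid_def)
  with p_pos show False
    by (metis less_irrefl)
qed

lemma is_opt_design_unique:
  assumes pos: "\<forall>i. 0 < v$i" and opt_p: "is_opt_design v p" and opt_q: "is_opt_design v q"
  shows "p = q"
proof (cases "\<exists>k. p$k = 0 \<or> q$k = 0")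
  case True
  then obtain k r where "is_opt_design v r" "r$k = 0"
    using opt_p opt_q by blast
  then have "p = face_centroid k" "q = face_centroid k"
    using is_opt_design_eq_face_centroid[OF pos] opt_p opt_q by blast+
  then show ?thesis by simp
next
  case False
  then have "\<forall>i. 0 < p$i" "\<forall>i. 0 < q$i"
    using opt_p opt_q by (auto simp: is_opt_design_def simplex4_def order_le_less)
  then show ?thesis
    using is_opt_design_interior_unique[OF pos opt_p opt_q] by blast
qed

lemma is_opt_design_exists: "\<exists>p. is_opt_design v p"
proof -
  have "continuous_on simplex4 (Lv v)"
    unfolding Lv_def by (intro continuous_intros)
  then obtain p where "p \<in> simplex4" "\<forall>q\<in>simplex4. Lv v q \<le> Lv v p"
    using continuous_attains_sup[OF compact_simplex4] uniform_design_simplex4 by blast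
  then show ?thesis
    by (auto simp: is_opt_design_def)
qed

lemma is_opt_design_opt_design:
  assumes "\<forall>i. 0 < v$i"
  shows "is_opt_design v (opt_design v)"
proof -
  have "\<exists>!p. is_opt_design v p"
    using is_opt_design_exists is_opt_design_unique[OF assms] by blast
  then show ?thesis
    unfolding opt_design_def is_opt_design_def[symmetric] by (rule theI')
qed

lemma opt_design_eqI:
  assumes "\<forall>i. 0 < v$i" "is_opt_design v p"
  shows "opt_design v = p"
  using is_opt_design_unique[OF assms(1) is_opt_design_opt_design[OF assms(1)] assms(2)] .

section \<open>The worst-case loss\<close>

definition cycle4 :: "4 \<Rightarrow> 4" where
  "cycle4 i = (if i = 1 then 2 else if i = 2 then 3 else if i = 3 then 4 else 1)"

definition rot :: "real^4 \<Rightarrow> real^4" where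
  "rot = permute_vec cycle4"

lemma bij_cycle4: "bij cycle4"
proof (rule bij_betwI[of _ _ _ "cycle4 ^^ 3"])
  show "(cycle4 ^^ 3) (cycle4 i) = i" "cycle4 ((cycle4 ^^ 3) i) = i" for i
    using exhaust_4[of i] by (auto simp: cycle4_def numeral_3_eq_3)
qed auto

lemma rot_nth [simp]: "rot w $ 1 = w $ 2" "rot w $ 2 = w $ 3" "rot w $ 3 = w $ 4" "rot w $ 4 = w $ 1"
  by (simp_all add: rot_def cycle4_def)

lemma Lmax_rot: "Lmax (rot w) = Lmax w"
  by (simp add: rot_def Lmax_permute_vec bij_cycle4)

lemma rot_box4: "w \<in> box4 a b \<Longrightarrow> rot w \<in> box4 a b"
  by (simp add: box4_def rot_def)

lemma box4_pos: "0 < a \<Longrightarrow> w \<in> box4 a b \<Longrightarrow> \<forall>i. 0 < w$i"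
  by (auto simp: box4_def intro: less_le_trans)

lemma sum_Lv_rot:
  "Lv w p + Lv (rot w) p + Lv (rot (rot w)) p + Lv (rot (rot (rot w))) p
    = (w$1 + w$2 + w$3 + w$4) * esym3 p"
  by (simp add: Lv_def esym3_def algebra_simps)

lemma exists_rot_Lv_le:
  "\<exists>w'\<in>{w, rot w, rot (rot w), rot (rot (rot w))}. Lv w' p \<le> 16 * esym3 p * Lv w uniform_design"
proof (rule ccontr)
  assume "\<not> ?thesis"
  then have "4 * (16 * esym3 p * Lv w uniform_design)
      < Lv w p + Lv (rot w) p + Lv (rot (rot w)) p + Lv (rot (rot (rot w))) p"
    by auto
  moreover have "Lv w p + Lv (rot w) p + Lv (rot (rot w)) p + Lv (rot (rot (rot w))) p
      = 4 * (16 * esym3 p * Lv w uniform_design)"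
    by (simp only: sum_Lv_rot Lv_uniform_design) (simp add: algebra_simps)
  ultimately show False
    by simp
qed

lemma esym3_nonneg: "p \<in> simplex4 \<Longrightarrow> 0 \<le> esym3 p"
  by (simp add: esym3_def simplex4_iff)

lemma efficiency_uniform_design_ge:
  assumes "0 < a" "w \<in> box4 a b"
  shows "0 < Lmax w" and "a / b \<le> Lv w uniform_design / Lmax w"
proof -
  have "a \<le> w$1" "a \<le> w$2" "a \<le> w$3" "a \<le> w$4" "w$1 \<le> b"
    using assms(2) by (auto simp: box4_def)
  then have u_ge: "a / 16 \<le> Lv w uniform_design" and "0 \<le> b"
    using assms(1) by (auto simp: Lv_uniform_design)
  moreover have u_le: "Lv w uniform_design \<le> Lmax w"
    using uniform_design_simplex4 by (rule Lv_le_Lmax)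
  ultimately show "0 < Lmax w"
    using assms(1) by linarith
  have "a / b = (a / 16) / (b / 16)" by simp
  also have "\<dots> \<le> Lv w uniform_design / Lmax w"
    using u_ge u_le Lmax_le[OF assms(2) \<open>0 \<le> b\<close>] \<open>0 < Lmax w\<close> assms(1)
    by (intro frac_le) auto
  finally show "a / b \<le> Lv w uniform_design / Lmax w" .
qed

lemma cube_root_loss_gap:
  fixes \<kappa> \<rho> c r :: real
  assumes "0 \<le> \<kappa>" "\<kappa> \<le> 1" "0 \<le> c" "c \<le> \<rho>" "0 \<le> r" "r \<le> \<kappa> * \<rho>"
  shows "(1 - \<rho> powr (1/3)) + (1 - \<kappa> powr (1/3)) * c powr (1/3) \<le> 1 - r powr (1/3)"
proof -
  have "r powr (1/3) \<le> (\<kappa> * \<rho>) powr (1/3)"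
    using assms by (intro powr_mono2) auto
  also have "\<dots> = \<kappa> powr (1/3) * \<rho> powr (1/3)"
    by (rule powr_mult)
  finally have "r powr (1/3) \<le> \<kappa> powr (1/3) * \<rho> powr (1/3)" .
  moreover have "(1 - \<kappa> powr (1/3)) * c powr (1/3) \<le> (1 - \<kappa> powr (1/3)) * \<rho> powr (1/3)"
    using assms powr_mono2[of "1/3" \<kappa> 1] by (intro mult_left_mono powr_mono2) auto
  ultimately show ?thesis
    by (simp add: algebra_simps)
qed

definition worst_loss :: "real \<Rightarrow> real \<Rightarrow> real^4 \<Rightarrow> real" where
  "worst_loss a b p = (SUP vt\<in>box4 a b. eff_loss p vt)"

lemma eff_loss_uniform_design_plus_gap:
  assumes "0 < a" "a \<le> b" "p \<in> simplex4" "w \<in> box4 a b"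
  shows "\<exists>w'\<in>box4 a b. eff_loss uniform_design w + (1 - (16 * esym3 p) powr (1/3)) * (a/b) powr (1/3)
           \<le> eff_loss p w'"
proof -
  obtain w' where w': "w' \<in> {w, rot w, rot (rot w), rot (rot (rot w))}"
    and le: "Lv w' p \<le> 16 * esym3 p * Lv w uniform_design"
    using exists_rot_Lv_le by blast
  have "w' \<in> box4 a b" and Lmax_w': "Lmax w' = Lmax w"
    using w' assms(4) by (auto simp: rot_box4 Lmax_rot)
  have "0 \<le> Lv w' p"
    using box4_pos[OF assms(1) \<open>w' \<in> box4 a b\<close>] assms(3) by (intro Lv_nonneg) (auto simp: less_imp_le)
  moreover note efficiency_uniform_design_ge[OF assms(1,4)]
  ultimately have "(1 - (Lv w uniform_design / Lmax w) powr (1/3))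
        + (1 - (16 * esym3 p) powr (1/3)) * (a/b) powr (1/3) \<le> 1 - (Lv w' p / Lmax w) powr (1/3)"
    using le esym3_nonneg[OF assms(3)] esym3_le[OF assms(3)] assms(1,2)
    by (intro cube_root_loss_gap) (auto simp: divide_right_mono)
  then have "eff_loss uniform_design w + (1 - (16 * esym3 p) powr (1/3)) * (a/b) powr (1/3)
      \<le> eff_loss p w'"
    by (simp add: eff_loss_def Lmax_w')
  with \<open>w' \<in> box4 a b\<close> show ?thesis by blast
qed

lemma worst_loss_uniform_design_plus_gap:
  assumes "0 < a" "a \<le> b" "p \<in> simplex4"
  shows "worst_loss a b uniform_design + (1 - (16 * esym3 p) powr (1/3)) * (a/b) powr (1/3)
           \<le> worst_loss a b p"
proof -
  define gap where "gap = (1 - (16 * esym3 p) powr (1/3)) * (a/b) powr (1/3)"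
  have "bdd_above (eff_loss p ` box4 a b)"
    by (rule bdd_aboveI[of _ 1]) (auto simp: eff_loss_def)
  then have "eff_loss uniform_design w \<le> worst_loss a b p - gap" if "w \<in> box4 a b" for w
    using eff_loss_uniform_design_plus_gap[OF assms that] cSUP_upper
    unfolding gap_def worst_loss_def by fastforce
  moreover have "box4 a b \<noteq> {}"
  proof -
    have "(\<chi> i. a) \<in> box4 a b" using assms(2) by (simp add: box4_def)
    then show ?thesis by blast
  qed
  ultimately have "worst_loss a b uniform_design \<le> worst_loss a b p - gap"
    unfolding worst_loss_def by (intro cSUP_least)
  then show ?thesis by (simp add: gap_def)
qed

lemma worst_loss_uniform_design_le:
  assumes "0 < a" "a \<le> b" "p \<in> simplex4"
  shows "worst_loss a b uniform_design \<le> worst_loss a b p"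
proof -
  have "(16 * esym3 p) powr (1/3) \<le> 1 powr (1/3)"
    using esym3_nonneg[OF assms(3)] esym3_le[OF assms(3)] by (intro powr_mono2) auto
  then have "0 \<le> (1 - (16 * esym3 p) powr (1/3)) * (a/b) powr (1/3)"
    by simp
  with worst_loss_uniform_design_plus_gap[OF assms] show ?thesis by linarith
qed

lemma worst_loss_uniform_design_less:
  assumes "0 < a" "a \<le> b" "p \<in> simplex4" "p \<noteq> uniform_design"
  shows "worst_loss a b uniform_design < worst_loss a b p"
proof -
  have "(16 * esym3 p) powr (1/3) < 1 powr (1/3)"
    using esym3_nonneg[OF assms(3)] esym3_less[OF assms(3,4)] by (intro powr_less_mono2) auto
  moreover have "0 < (a/b) powr (1/3)"
    using assms(1,2) by simp
  ultimately have "0 < (1 - (16 * esym3 p) powr (1/3)) * (a/b) powr (1/3)"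
    by simp
  with worst_loss_uniform_design_plus_gap[OF assms(1-3)] show ?thesis by linarith
qed

lemma opt_design_const:
  assumes "0 < c"
  shows "opt_design (\<chi> i. c) = uniform_design"
proof (rule opt_design_eqI)
  show "\<forall>i. 0 < (\<chi> i. c) $ i" using assms by simp
  have "Lv (\<chi> i. c) q \<le> Lv (\<chi> i. c) uniform_design" if "q \<in> simplex4" for q
  proof -
    have "Lv (\<chi> i. c) q = c * esym3 q" by (simp add: Lv_def esym3_def algebra_simps)
    also have "\<dots> \<le> c * (1/16)" using esym3_le[OF that] assms by (intro mult_left_mono) auto
    also have "\<dots> = Lv (\<chi> i. c) uniform_design" by (simp add: Lv_uniform_design)
    finally show ?thesis .
  qed
  then show "is_opt_design (\<chi> i. c) uniform_design"
    using uniform_design_simplex4 by (simp add: is_opt_design_def)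
qed

theorem theorem3:
  fixes a b :: real and vc :: "real^4"
  assumes "0 < a" and "a \<le> b" and "vc \<in> box4 a b"
  shows "(\<forall>vc'\<in>box4 a b. Rmax a b vc \<le> Rmax a b vc') \<longleftrightarrow> opt_design vc = uniform_design"
proof -
  have Rmax_eq: "Rmax a b v = worst_loss a b (opt_design v)" for v
    by (simp add: Rmax_def worst_loss_def)
  have opt_simplex: "opt_design v \<in> simplex4" if "v \<in> box4 a b" for v
    using is_opt_design_opt_design[OF box4_pos[OF assms(1) that]] by (simp add: is_opt_design_def)
  have const: "(\<chi> i. a) \<in> box4 a b" "opt_design (\<chi> i. a) = uniform_design"
    using assms(1,2) by (simp_all add: box4_def opt_design_const)
  show ?thesis
  proof
    assume "\<forall>vc'\<in>box4 a b. Rmax a b vc \<le> Rmax a b vc'"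
    then have "worst_loss a b (opt_design vc) \<le> worst_loss a b uniform_design"
      using const by (metis Rmax_eq)
    then show "opt_design vc = uniform_design"
      using worst_loss_uniform_design_less[OF assms(1,2) opt_simplex[OF assms(3)]] by fastforce
  next
    assume "opt_design vc = uniform_design"
    then show "\<forall>vc'\<in>box4 a b. Rmax a b vc \<le> Rmax a b vc'"
      using worst_loss_uniform_design_le[OF assms(1,2) opt_simplex] by (simp add: Rmax_eq)
  qed
qed

end
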